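(* Let $Q$ be a commutative automorphic loop of nilpotency class $3$. Then $(a,(b,c,d),(e,f,g))=((a,b,c),d,(e,f,g))=((a,b,c),(d,e,f),g)=1$ for every $a,b,c,d,e,f,g\in Q$.
   Context: A loop is a set with a binary operation such that all left and right translations $L_a:b\mapsto ab$, $R_a:b\mapsto ba$ are bijections and there is a two-sided identity $1$. The inner mapping group is the stabilizer of $1$ in the group generated by all translations; $Q$ is automorphic if all inner mappings are automorphisms. The associator $(a,b,c)$ is defined by $(ab)c=(a(bc))(a,b,c)$. The center $Z(Q)$ is the set of elements fixed by all inner mappings; $Z_0=1$, $Z_{i+1}(Q)$ is the preimage of $Z(Q/Z_i(Q))$, and $Q$ has nilpotency class $n$ if $Z_{n-1}(Q)\neq Q=Z_n(Q)$. *)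

theory Defs
  imports Main
begin

definition loop :: "'a set \<Rightarrow> ('a \<Rightarrow> 'a \<Rightarrow> 'a) \<Rightarrow> 'a \<Rightarrow> bool" where
  "loop S m u \<longleftrightarrow> u \<in> S \<and> (\<forall>a\<in>S. \<forall>b\<in>S. m a b \<in> S)
     \<and> (\<forall>a\<in>S. bij_betw (m a) S S) \<and> (\<forall>a\<in>S. bij_betw (\<lambda>b. m b a) S S)
     \<and> (\<forall>a\<in>S. m u a = a \<and> m a u = a)"

text \<open>Translations and their inverses, as permutations of the whole type fixing everything
  outside the carrier.\<close>

definition Ltr :: "'a set \<Rightarrow> ('a \<Rightarrow> 'a \<Rightarrow> 'a) \<Rightarrow> 'a \<Rightarrow> 'a \<Rightarrow> 'a" where
  "Ltr S m a = (\<lambda>b. if b \<in> S then m a b else b)"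

definition Rtr :: "'a set \<Rightarrow> ('a \<Rightarrow> 'a \<Rightarrow> 'a) \<Rightarrow> 'a \<Rightarrow> 'a \<Rightarrow> 'a" where
  "Rtr S m a = (\<lambda>b. if b \<in> S then m b a else b)"

definition Ltr_inv :: "'a set \<Rightarrow> ('a \<Rightarrow> 'a \<Rightarrow> 'a) \<Rightarrow> 'a \<Rightarrow> 'a \<Rightarrow> 'a" where
  "Ltr_inv S m a = (\<lambda>b. if b \<in> S then inv_into S (m a) b else b)"

definition Rtr_inv :: "'a set \<Rightarrow> ('a \<Rightarrow> 'a \<Rightarrow> 'a) \<Rightarrow> 'a \<Rightarrow> 'a \<Rightarrow> 'a" where
  "Rtr_inv S m a = (\<lambda>b. if b \<in> S then inv_into S (\<lambda>x. m x a) b else b)"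

inductive_set Mlt :: "'a set \<Rightarrow> ('a \<Rightarrow> 'a \<Rightarrow> 'a) \<Rightarrow> ('a \<Rightarrow> 'a) set"
  for S m where
  Mlt_id: "id \<in> Mlt S m"
| Mlt_L: "f \<in> Mlt S m \<Longrightarrow> a \<in> S \<Longrightarrow> Ltr S m a \<circ> f \<in> Mlt S m"
| Mlt_R: "f \<in> Mlt S m \<Longrightarrow> a \<in> S \<Longrightarrow> Rtr S m a \<circ> f \<in> Mlt S m"
| Mlt_Linv: "f \<in> Mlt S m \<Longrightarrow> a \<in> S \<Longrightarrow> Ltr_inv S m a \<circ> f \<in> Mlt S m"
| Mlt_Rinv: "f \<in> Mlt S m \<Longrightarrow> a \<in> S \<Longrightarrow> Rtr_inv S m a \<circ> f \<in> Mlt S m"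

definition Inn :: "'a set \<Rightarrow> ('a \<Rightarrow> 'a \<Rightarrow> 'a) \<Rightarrow> 'a \<Rightarrow> ('a \<Rightarrow> 'a) set" where
  "Inn S m u = {f \<in> Mlt S m. f u = u}"

definition automorphic :: "'a set \<Rightarrow> ('a \<Rightarrow> 'a \<Rightarrow> 'a) \<Rightarrow> 'a \<Rightarrow> bool" where
  "automorphic S m u \<longleftrightarrow> loop S m u \<and>
     (\<forall>f\<in>Inn S m u. bij_betw f S S \<and> (\<forall>a\<in>S. \<forall>b\<in>S. f (m a b) = m (f a) (f b)))"

definition commutative_loop :: "'a set \<Rightarrow> ('a \<Rightarrow> 'a \<Rightarrow> 'a) \<Rightarrow> 'a \<Rightarrow> bool" where
  "commutative_loop S m u \<longleftrightarrow> loop S m u \<and> (\<forall>a\<in>S. \<forall>b\<in>S. m a b = m b a)"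

definition assoc :: "'a set \<Rightarrow> ('a \<Rightarrow> 'a \<Rightarrow> 'a) \<Rightarrow> 'a \<Rightarrow> 'a \<Rightarrow> 'a \<Rightarrow> 'a" where
  "assoc S m a b c = (THE z. z \<in> S \<and> m (m a b) c = m (m a (m b c)) z)"

definition center :: "'a set \<Rightarrow> ('a \<Rightarrow> 'a \<Rightarrow> 'a) \<Rightarrow> 'a \<Rightarrow> 'a set" where
  "center S m u = {x \<in> S. \<forall>f\<in>Inn S m u. f x = x}"

definition quot_carrier :: "'a set \<Rightarrow> ('a \<Rightarrow> 'a \<Rightarrow> 'a) \<Rightarrow> 'a set \<Rightarrow> 'a set set" where
  "quot_carrier S m N = (\<lambda>x. m x ` N) ` S"

definition quot_mult :: "('a \<Rightarrow> 'a \<Rightarrow> 'a) \<Rightarrow> 'a set \<Rightarrow> 'a set \<Rightarrow> 'a set \<Rightarrow> 'a set" where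
  "quot_mult m N A B = m (m (SOME a. a \<in> A) (SOME b. b \<in> B)) ` N"

fun upper_center :: "'a set \<Rightarrow> ('a \<Rightarrow> 'a \<Rightarrow> 'a) \<Rightarrow> 'a \<Rightarrow> nat \<Rightarrow> 'a set" where
  "upper_center S m u 0 = {u}"
| "upper_center S m u (Suc i) =
     (let N = upper_center S m u i in
       {x \<in> S. m x ` N \<in> center (quot_carrier S m N) (quot_mult m N) N})"

definition nilpotency_class :: "'a set \<Rightarrow> ('a \<Rightarrow> 'a \<Rightarrow> 'a) \<Rightarrow> 'a \<Rightarrow> nat \<Rightarrow> bool" where
  "nilpotency_class S m u n \<longleftrightarrow> upper_center S m u n = S \<and>
     (n > 0 \<longrightarrow> upper_center S m u (n - 1) \<noteq> S)"

end

theory Submission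
  imports Defs
begin

text \<open>In a commutative automorphic loop an associator lies in Z_n as soon as one of its
  arguments lies in Z_(n+1), so in class 3 every associator lies in Z_2. If x or y lies in Z_2,
  the inner mapping R_xy^-1 R_y R_x therefore moves every element only by a central factor.
  Central factors drop out of associators and inner mappings are automorphisms, so this mapping
  fixes every associator A, which says (Ax)y = A(xy). Each of the three identities has this
  form, the first one after reversing the associator by commutativity.\<close>

lemma Rtr_eq_Ltr:
  assumes "\<And>b. b \<in> S \<Longrightarrow> m b a = m a b"
  shows "Rtr S m a = Ltr S m a"
  using assms by (auto simp: Rtr_def Ltr_def)

lemma Rtr_inv_eq_Ltr_inv:
  assumes "\<And>b. b \<in> S \<Longrightarrow> m b a = m a b"
  shows "Rtr_inv S m a = Ltr_inv S m a"
proof -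
  have "inv_into S (\<lambda>x. m x a) = inv_into S (m a)"
    using assms by (auto simp: inv_into_def intro!: ext arg_cong[where f = Eps])
  then show ?thesis unfolding Rtr_inv_def Ltr_inv_def by metis
qed

lemma Mlt_commutative_induct [consumes 1, case_names id Ltr Ltr_inv commute]:
  assumes "f \<in> Mlt S m"
    and "P id"
    and "\<And>f a. f \<in> Mlt S m \<Longrightarrow> P f \<Longrightarrow> a \<in> S \<Longrightarrow> P (Ltr S m a \<circ> f)"
    and "\<And>f a. f \<in> Mlt S m \<Longrightarrow> P f \<Longrightarrow> a \<in> S \<Longrightarrow> P (Ltr_inv S m a \<circ> f)"
    and "\<And>a b. a \<in> S \<Longrightarrow> b \<in> S \<Longrightarrow> m a b = m b a"
  shows "P f"
  using assms(1)
proof (induction rule: Mlt.induct)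
  case (Mlt_R f a)
  then show ?case using assms(3,5) Rtr_eq_Ltr[of S m a] by metis
next
  case (Mlt_Rinv f a)
  then show ?case using assms(4,5) Rtr_inv_eq_Ltr_inv[of S m a] by metis
qed (use assms(2-4) in blast)+

locale comm_loop =
  fixes S :: "'a set" and m :: "'a \<Rightarrow> 'a \<Rightarrow> 'a" and u :: 'a
  assumes commutative_loop: "commutative_loop S m u"
begin

lemma unit_in [simp]: "u \<in> S"
  and mult_in [simp]: "a \<in> S \<Longrightarrow> b \<in> S \<Longrightarrow> m a b \<in> S"
  and bij_mult_left: "a \<in> S \<Longrightarrow> bij_betw (m a) S S"
  and left_unit [simp]: "a \<in> S \<Longrightarrow> m u a = a"
  and right_unit [simp]: "a \<in> S \<Longrightarrow> m a u = a"
  using commutative_loop unfolding commutative_loop_def loop_def by simp_all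

lemma mult_commute: "a \<in> S \<Longrightarrow> b \<in> S \<Longrightarrow> m a b = m b a"
  using commutative_loop unfolding commutative_loop_def by simp

lemma mult_left_cancel: "a \<in> S \<Longrightarrow> x \<in> S \<Longrightarrow> y \<in> S \<Longrightarrow> m a x = m a y \<Longrightarrow> x = y"
  using bij_mult_left[of a] unfolding bij_betw_def inj_on_def by blast

abbreviation ldiv :: "'a \<Rightarrow> 'a \<Rightarrow> 'a" where
  "ldiv a b \<equiv> Ltr_inv S m a b"

lemma ldiv_in [simp]: "a \<in> S \<Longrightarrow> b \<in> S \<Longrightarrow> ldiv a b \<in> S"
  unfolding Ltr_inv_def using bij_mult_left[of a] by (simp add: bij_betw_def inv_into_into)

lemma mult_ldiv [simp]: "a \<in> S \<Longrightarrow> b \<in> S \<Longrightarrow> m a (ldiv a b) = b"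
  unfolding Ltr_inv_def using bij_mult_left[of a] by (simp add: bij_betw_inv_into_right)

lemma ldiv_mult [simp]: "a \<in> S \<Longrightarrow> b \<in> S \<Longrightarrow> ldiv a (m a b) = b"
  by (meson mult_left_cancel mult_ldiv ldiv_in mult_in)

lemma ldiv_self [simp]: "a \<in> S \<Longrightarrow> ldiv a a = u"
  using ldiv_mult[of a u] by simp

lemma Ltr_apply [simp]: "b \<in> S \<Longrightarrow> Ltr S m a b = m a b"
  by (simp add: Ltr_def)

lemma Mlt_in: "f \<in> Mlt S m \<Longrightarrow> x \<in> S \<Longrightarrow> f x \<in> S"
  by (induction f arbitrary: x rule: Mlt_commutative_induct) (auto simp: mult_commute)

lemma Mlt_comp: "f \<in> Mlt S m \<Longrightarrow> g \<in> Mlt S m \<Longrightarrow> f \<circ> g \<in> Mlt S m"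
  by (induction f rule: Mlt.induct) (auto simp: comp_assoc intro: Mlt.intros)

lemma Ltr_in_Mlt: "a \<in> S \<Longrightarrow> Ltr S m a \<in> Mlt S m"
  using Mlt_L[OF Mlt_id] by simp

lemma Ltr_inv_in_Mlt: "a \<in> S \<Longrightarrow> Ltr_inv S m a \<in> Mlt S m"
  using Mlt_Linv[OF Mlt_id] by simp

lemma Inn_in_Mlt: "t \<in> Inn S m u \<Longrightarrow> t \<in> Mlt S m"
  and Inn_unit: "t \<in> Inn S m u \<Longrightarrow> t u = u"
  by (simp_all add: Inn_def)

lemma Inn_in: "t \<in> Inn S m u \<Longrightarrow> x \<in> S \<Longrightarrow> t x \<in> S"
  using Inn_in_Mlt Mlt_in by blast

lemma Inn_comp: "t \<in> Inn S m u \<Longrightarrow> s \<in> Inn S m u \<Longrightarrow> t \<circ> s \<in> Inn S m u"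
  unfolding Inn_def using Mlt_comp by auto

lemma Ltr_inv_comp_in_Inn:
  assumes "f \<in> Mlt S m"
  shows "Ltr_inv S m (f u) \<circ> f \<in> Inn S m u"
  using Mlt_Linv[OF assms Mlt_in[OF assms unit_in]] Mlt_in[OF assms unit_in] unfolding Inn_def by simp

lemma Mlt_decompose: "f \<in> Mlt S m \<Longrightarrow> x \<in> S \<Longrightarrow> f x = m (f u) ((Ltr_inv S m (f u) \<circ> f) x)"
  using Mlt_in by simp

lemma assoc_unique:
  assumes "a \<in> S" "b \<in> S" "c \<in> S"
  shows "\<exists>!z. z \<in> S \<and> m (m a b) c = m (m a (m b c)) z"
  using assms by (intro ex1I[of _ "ldiv (m a (m b c)) (m (m a b) c)"]) auto

lemma assoc_in [simp]: "a \<in> S \<Longrightarrow> b \<in> S \<Longrightarrow> c \<in> S \<Longrightarrow> assoc S m a b c \<in> S"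
  and assoc_eq: "a \<in> S \<Longrightarrow> b \<in> S \<Longrightarrow> c \<in> S \<Longrightarrow>
    m (m a b) c = m (m a (m b c)) (assoc S m a b c)"
  using theI'[OF assoc_unique] unfolding assoc_def by blast+

lemma assoc_eqI:
  assumes "a \<in> S" "b \<in> S" "c \<in> S" "z \<in> S" "m (m a b) c = m (m a (m b c)) z"
  shows "assoc S m a b c = z"
  using assms the1_equality[OF assoc_unique] unfolding assoc_def by blast

lemma assoc_eq_unit_iff:
  "a \<in> S \<Longrightarrow> b \<in> S \<Longrightarrow> c \<in> S \<Longrightarrow> assoc S m a b c = u \<longleftrightarrow> m (m a b) c = m a (m b c)"
  by (metis assoc_eqI assoc_eq mult_in right_unit unit_in)

lemma assoc_eq_unit_swap:
  "a \<in> S \<Longrightarrow> b \<in> S \<Longrightarrow> c \<in> S \<Longrightarrow> assoc S m c b a = u \<Longrightarrow> assoc S m a b c = u"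
  by (simp add: assoc_eq_unit_iff mult_commute)

section \<open>Cosets of normal subloops\<close>

definition normal_subloop :: "'a set \<Rightarrow> bool" where
  "normal_subloop N \<longleftrightarrow> N \<subseteq> S \<and> u \<in> N \<and> (\<forall>a\<in>N. \<forall>b\<in>N. m a b \<in> N \<and> ldiv a b \<in> N)
     \<and> (\<forall>t\<in>Inn S m u. \<forall>n\<in>N. t n \<in> N)"

definition coset :: "'a set \<Rightarrow> 'a \<Rightarrow> 'a set" where
  "coset N x = m x ` N"

text \<open>The preimage of the center of Q/N, described without the quotient
  (see coset_in_quot_center_iff).\<close>

definition center_mod :: "'a set \<Rightarrow> 'a set" where
  "center_mod N = {x \<in> S. \<forall>t\<in>Inn S m u. t x \<in> coset N x}"

lemma center_modI: "x \<in> S \<Longrightarrow> (\<And>t. t \<in> Inn S m u \<Longrightarrow> t x \<in> coset N x) \<Longrightarrow> x \<in> center_mod N"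
  and center_modD: "x \<in> center_mod N \<Longrightarrow> t \<in> Inn S m u \<Longrightarrow> t x \<in> coset N x"
  and center_mod_in: "x \<in> center_mod N \<Longrightarrow> x \<in> S"
  by (auto simp: center_mod_def)

context
  fixes N assumes N: "normal_subloop N"
begin

lemma normal_subloop_in: "n \<in> N \<Longrightarrow> n \<in> S"
  and unit_in_normal: "u \<in> N"
  and ldiv_in_normal: "a \<in> N \<Longrightarrow> b \<in> N \<Longrightarrow> ldiv a b \<in> N"
  and Inn_in_normal: "t \<in> Inn S m u \<Longrightarrow> n \<in> N \<Longrightarrow> t n \<in> N"
  using N unfolding normal_subloop_def by blast+

lemma coset_in: "x \<in> S \<Longrightarrow> y \<in> coset N x \<Longrightarrow> y \<in> S"
  unfolding coset_def using normal_subloop_in by auto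

lemma self_in_coset: "x \<in> S \<Longrightarrow> x \<in> coset N x"
  unfolding coset_def using unit_in_normal right_unit[of x] by (metis image_eqI)

lemma coset_unit: "coset N u = N"
  unfolding coset_def using normal_subloop_in by simp

lemma Mlt_mult_in_coset:
  assumes f: "f \<in> Mlt S m" and x: "x \<in> S" and n: "n \<in> N"
  shows "f (m x n) \<in> coset N (f x)"
proof -
  define g where "g = f \<circ> Ltr S m x"
  have g: "g \<in> Mlt S m" unfolding g_def by (rule Mlt_comp[OF f Ltr_in_Mlt[OF x]])
  have gu: "g u = f x" unfolding g_def using x by simp
  have "g n = m (g u) ((Ltr_inv S m (g u) \<circ> g) n)" by (rule Mlt_decompose[OF g normal_subloop_in[OF n]])
  moreover have "g n = f (m x n)" unfolding g_def using normal_subloop_in[OF n] by simp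
  moreover have "(Ltr_inv S m (g u) \<circ> g) n \<in> N" by (rule Inn_in_normal[OF Ltr_inv_comp_in_Inn[OF g] n])
  ultimately show ?thesis unfolding coset_def gu by auto
qed

lemma coset_sym:
  assumes x: "x \<in> S" and y: "y \<in> coset N x"
  shows "x \<in> coset N y"
proof -
  obtain n where n: "n \<in> N" and y_eq: "y = m x n" using y unfolding coset_def by auto
  have nS: "n \<in> S" and yS: "y \<in> S" using normal_subloop_in[OF n] coset_in[OF x y] .
  define k where "k = ldiv y x"
  have kS: "k \<in> S" unfolding k_def using x yS by simp
  \<comment> \<open>g = L_y^-1 L_x sends n to u = g u \<cdot> (inner mapping) n = k n', hence k \<in> N.\<close>
  define g where "g = Ltr_inv S m y \<circ> Ltr S m x"
  have g: "g \<in> Mlt S m" unfolding g_def by (rule Mlt_comp[OF Ltr_inv_in_Mlt[OF yS] Ltr_in_Mlt[OF x]])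
  have gu: "g u = k" unfolding g_def k_def using x by simp
  define n' where "n' = (Ltr_inv S m (g u) \<circ> g) n"
  have n': "n' \<in> N" unfolding n'_def by (rule Inn_in_normal[OF Ltr_inv_comp_in_Inn[OF g] n])
  have "g n = ldiv y y" unfolding g_def using nS by (simp add: y_eq)
  also have "\<dots> = u" using yS by simp
  finally have "g n = u" .
  moreover have "g n = m (g u) n'" unfolding n'_def by (rule Mlt_decompose[OF g nS])
  ultimately have "u = m k n'" using gu by simp
  then have "k = ldiv n' u"
    using mult_commute[OF kS normal_subloop_in[OF n']] ldiv_mult[OF normal_subloop_in[OF n'] kS] by simp
  then have "k \<in> N" using ldiv_in_normal[OF n' unit_in_normal] by simp
  moreover have "x = m y k" unfolding k_def using x yS by simp
  ultimately show ?thesis unfolding coset_def by auto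
qed

lemma coset_subset:
  assumes x: "x \<in> S" and y: "y \<in> coset N x"
  shows "coset N x \<subseteq> coset N y"
proof
  fix z assume "z \<in> coset N x"
  then obtain n' where n': "n' \<in> N" and z: "z = m x n'" unfolding coset_def by auto
  obtain n where n: "n \<in> N" and y_eq: "y = m x n" using y unfolding coset_def by auto
  define k where "k = ldiv n n'"
  have k: "k \<in> N" unfolding k_def using ldiv_in_normal n n' by simp
  have "n' = m n k" unfolding k_def using normal_subloop_in n n' by simp
  then have "z = Ltr S m x (m n k)" using z normal_subloop_in n k by simp
  also have "\<dots> \<in> coset N (Ltr S m x n)"
    by (rule Mlt_mult_in_coset[OF Ltr_in_Mlt[OF x] normal_subloop_in[OF n] k])
  finally show "z \<in> coset N y" using y_eq normal_subloop_in[OF n] by simp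
qed

lemma coset_eq: "x \<in> S \<Longrightarrow> y \<in> coset N x \<Longrightarrow> coset N y = coset N x"
  by (metis coset_in coset_subset coset_sym subset_antisym)

lemma coset_trans: "x \<in> S \<Longrightarrow> y \<in> coset N x \<Longrightarrow> z \<in> coset N y \<Longrightarrow> z \<in> coset N x"
  using coset_eq by blast

lemma coset_mult:
  assumes x: "x \<in> S" and y: "y \<in> S" and x': "x' \<in> coset N x" and y': "y' \<in> coset N y"
  shows "m x' y' \<in> coset N (m x y)"
proof -
  obtain n1 where n1: "n1 \<in> N" and x'_eq: "x' = m x n1" using x' unfolding coset_def by auto
  obtain n2 where n2: "n2 \<in> N" and y'_eq: "y' = m y n2" using y' unfolding coset_def by auto
  have y'S: "y' \<in> S" using coset_in[OF y y'] .
  have "m x' y' = Ltr S m y' (m x n1)"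
    using x'_eq normal_subloop_in[OF n1] x y'S mult_commute by simp
  also have "\<dots> \<in> coset N (Ltr S m y' x)" by (rule Mlt_mult_in_coset[OF Ltr_in_Mlt[OF y'S] x n1])
  finally have "m x' y' \<in> coset N (m x y')" using x y'S mult_commute by simp
  moreover have "m x y' \<in> coset N (m x y)"
    using Mlt_mult_in_coset[OF Ltr_in_Mlt[OF x] y n2] y'_eq normal_subloop_in[OF n2] y by simp
  ultimately show ?thesis using coset_trans x y by simp
qed

lemma coset_cancel_left:
  assumes x: "x \<in> S" and y: "y \<in> S" and z: "z \<in> S" and xy: "m x y \<in> coset N (m x z)"
  shows "y \<in> coset N z"
proof -
  obtain n where n: "n \<in> N" and "m x y = m (m x z) n" using xy unfolding coset_def by auto
  then have "y = Ltr_inv S m x (m (m x z) n)" using x y by (metis ldiv_mult)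
  also have "\<dots> \<in> coset N (Ltr_inv S m x (m x z))"
    by (rule Mlt_mult_in_coset[OF Ltr_inv_in_Mlt[OF x] _ n]) (simp add: x z)
  finally show ?thesis using x z by simp
qed

lemma Mlt_center_mod:
  assumes x: "x \<in> center_mod N" and f: "f \<in> Mlt S m"
  shows "f x \<in> coset N (m (f u) x)"
proof -
  have xS: "x \<in> S" using center_mod_in[OF x] .
  have fu: "f u \<in> S" using Mlt_in[OF f] by simp
  have "(Ltr_inv S m (f u) \<circ> f) x \<in> coset N x" by (rule center_modD[OF x Ltr_inv_comp_in_Inn[OF f]])
  then have "m (f u) ((Ltr_inv S m (f u) \<circ> f) x) \<in> coset N (m (f u) x)"
    by (rule coset_mult[OF fu xS self_in_coset[OF fu]])
  then show ?thesis by (simp only: Mlt_decompose[OF f xS, symmetric])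
qed

section \<open>The quotient loop\<close>

lemma quot_carrier_eq: "quot_carrier S m N = coset N ` S"
  unfolding quot_carrier_def coset_def ..

lemma coset_in_quot_carrier: "x \<in> S \<Longrightarrow> coset N x \<in> quot_carrier S m N"
  by (simp add: quot_carrier_eq)

lemma quot_carrierE:
  assumes "X \<in> quot_carrier S m N" obtains x where "x \<in> S" "X = coset N x"
  using assms by (auto simp: quot_carrier_eq)

lemma quot_mult_coset:
  assumes x: "x \<in> S" and y: "y \<in> S"
  shows "quot_mult m N (coset N x) (coset N y) = coset N (m x y)"
proof -
  have a: "(SOME a. a \<in> coset N x) \<in> coset N x" by (rule someI[of _ x]) (rule self_in_coset[OF x])
  have b: "(SOME b. b \<in> coset N y) \<in> coset N y" by (rule someI[of _ y]) (rule self_in_coset[OF y])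
  show ?thesis
    unfolding quot_mult_def coset_def[symmetric]
    using coset_eq[OF mult_in[OF x y] coset_mult[OF x y a b]] .
qed

lemma quot_mult_commute:
  "X \<in> quot_carrier S m N \<Longrightarrow> Y \<in> quot_carrier S m N \<Longrightarrow> quot_mult m N X Y = quot_mult m N Y X"
  by (elim quot_carrierE) (simp add: quot_mult_coset mult_commute)

lemma inj_on_quot_mult:
  assumes a: "a \<in> S"
  shows "inj_on (quot_mult m N (coset N a)) (quot_carrier S m N)"
proof (rule inj_onI)
  fix X Y assume "X \<in> quot_carrier S m N" "Y \<in> quot_carrier S m N"
    and eq: "quot_mult m N (coset N a) X = quot_mult m N (coset N a) Y"
  then obtain x y where x: "x \<in> S" "X = coset N x" and y: "y \<in> S" "Y = coset N y"
    by (auto elim!: quot_carrierE)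
  have "coset N (m a x) = coset N (m a y)" using eq x y a by (simp add: quot_mult_coset)
  then have "m a y \<in> coset N (m a x)" using self_in_coset[of "m a y"] a y by simp
  then have "y \<in> coset N x" by (rule coset_cancel_left[OF a y(1) x(1)])
  then show "X = Y" using coset_eq[OF x(1)] x y by metis
qed

lemma Ltr_quot:
  "a \<in> S \<Longrightarrow> x \<in> S \<Longrightarrow>
    Ltr (quot_carrier S m N) (quot_mult m N) (coset N a) (coset N x) = coset N (m a x)"
  by (simp add: Ltr_def coset_in_quot_carrier quot_mult_coset)

lemma Ltr_inv_quot:
  assumes a: "a \<in> S" and x: "x \<in> S"
  shows "Ltr_inv (quot_carrier S m N) (quot_mult m N) (coset N a) (coset N x) = coset N (ldiv a x)"
proof -
  have "inv_into (quot_carrier S m N) (quot_mult m N (coset N a)) (coset N x) = coset N (ldiv a x)"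
    by (rule inv_into_f_eq[OF inj_on_quot_mult[OF a] coset_in_quot_carrier])
       (simp_all add: a x quot_mult_coset)
  then show ?thesis unfolding Ltr_inv_def using coset_in_quot_carrier[OF x] by simp
qed

lemma Mlt_quot_of_Mlt:
  assumes "f \<in> Mlt S m"
  shows "\<exists>F \<in> Mlt (quot_carrier S m N) (quot_mult m N). \<forall>x\<in>S. F (coset N x) = coset N (f x)"
  using assms
proof (induction rule: Mlt_commutative_induct)
  case id
  show ?case by (rule bexI[of _ id]) (simp_all add: Mlt.Mlt_id)
next
  case (Ltr f a)
  then obtain F where "F \<in> Mlt (quot_carrier S m N) (quot_mult m N)" "\<forall>x\<in>S. F (coset N x) = coset N (f x)"
    by blast
  then show ?case
    using Ltr Mlt_in Ltr_quot coset_in_quot_carrier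
    by (intro bexI[of _ "Ltr (quot_carrier S m N) (quot_mult m N) (coset N a) \<circ> F"]) (auto intro: Mlt.Mlt_L)
next
  case (Ltr_inv f a)
  then obtain F where "F \<in> Mlt (quot_carrier S m N) (quot_mult m N)" "\<forall>x\<in>S. F (coset N x) = coset N (f x)"
    by blast
  then show ?case
    using Ltr_inv Mlt_in Ltr_inv_quot coset_in_quot_carrier
    by (intro bexI[of _ "Ltr_inv (quot_carrier S m N) (quot_mult m N) (coset N a) \<circ> F"]) (auto intro: Mlt.Mlt_Linv)
qed (fact mult_commute)

lemma Mlt_of_Mlt_quot:
  assumes "F \<in> Mlt (quot_carrier S m N) (quot_mult m N)"
  shows "\<exists>f \<in> Mlt S m. \<forall>x\<in>S. F (coset N x) = coset N (f x)"
  using assms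
proof (induction rule: Mlt_commutative_induct)
  case id
  show ?case by (rule bexI[of _ id]) (simp_all add: Mlt.Mlt_id)
next
  case (Ltr F A)
  then obtain f where "f \<in> Mlt S m" "\<forall>x\<in>S. F (coset N x) = coset N (f x)" by blast
  moreover obtain a where "a \<in> S" "A = coset N a" using \<open>A \<in> quot_carrier S m N\<close> by (rule quot_carrierE)
  ultimately show ?case
    using Mlt_in Ltr_quot by (intro bexI[of _ "Ltr S m a \<circ> f"]) (auto intro: Mlt.Mlt_L)
next
  case (Ltr_inv F A)
  then obtain f where "f \<in> Mlt S m" "\<forall>x\<in>S. F (coset N x) = coset N (f x)" by blast
  moreover obtain a where "a \<in> S" "A = coset N a" using \<open>A \<in> quot_carrier S m N\<close> by (rule quot_carrierE)
  ultimately show ?case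
    using Mlt_in Ltr_inv_quot by (intro bexI[of _ "Ltr_inv S m a \<circ> f"]) (auto intro: Mlt.Mlt_Linv)
qed (fact quot_mult_commute)

lemma coset_in_quot_center_iff:
  assumes x: "x \<in> S"
  shows "coset N x \<in> center (quot_carrier S m N) (quot_mult m N) N \<longleftrightarrow> x \<in> center_mod N"
proof
  assume central: "coset N x \<in> center (quot_carrier S m N) (quot_mult m N) N"
  show "x \<in> center_mod N"
  proof (rule center_modI[OF x])
    fix t assume t: "t \<in> Inn S m u"
    obtain F where F: "F \<in> Mlt (quot_carrier S m N) (quot_mult m N)"
      and F_coset: "\<forall>y\<in>S. F (coset N y) = coset N (t y)"
      using Mlt_quot_of_Mlt[OF Inn_in_Mlt[OF t]] by blast
    have "F N = N" using F_coset Inn_unit[OF t] coset_unit by (metis unit_in)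
    then have "F \<in> Inn (quot_carrier S m N) (quot_mult m N) N" using F unfolding Inn_def by simp
    then have "F (coset N x) = coset N x" using central unfolding center_def by blast
    then have "coset N (t x) = coset N x" using F_coset x by simp
    then show "t x \<in> coset N x" using self_in_coset[OF Inn_in[OF t x]] by simp
  qed
next
  assume x_central: "x \<in> center_mod N"
  have "F (coset N x) = coset N x" if F: "F \<in> Inn (quot_carrier S m N) (quot_mult m N) N" for F
  proof -
    obtain f where f: "f \<in> Mlt S m" and F_coset: "\<forall>y\<in>S. F (coset N y) = coset N (f y)"
      using Mlt_of_Mlt_quot F unfolding Inn_def by blast
    have fu: "f u \<in> S" using Mlt_in[OF f] by simp
    have "coset N (f u) = N" using F F_coset coset_unit unfolding Inn_def by (metis (mono_tags) mem_Collect_eq unit_in)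
    then have "f u \<in> coset N u" using self_in_coset[OF fu] coset_unit by simp
    then have "m (f u) x \<in> coset N x" using coset_mult[OF unit_in x _ self_in_coset[OF x]] x by simp
    then have "f x \<in> coset N x" using coset_trans[OF x _ Mlt_center_mod[OF x_central f]] by blast
    then show ?thesis using F_coset coset_eq[OF x] x by metis
  qed
  then show "coset N x \<in> center (quot_carrier S m N) (quot_mult m N) N"
    unfolding center_def using coset_in_quot_carrier[OF x] by blast
qed

lemma mult_assoc_coset:
  assumes w: "w \<in> S" and x: "x \<in> S" and y: "y \<in> S"
    and central: "w \<in> center_mod N \<or> x \<in> center_mod N \<or> y \<in> center_mod N"
  shows "m (m w x) y \<in> coset N (m w (m x y))"
  using central
proof (elim disjE)
  assume "w \<in> center_mod N"
  from Mlt_center_mod[OF this Mlt_comp[OF Ltr_in_Mlt[OF y] Ltr_in_Mlt[OF x]]]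
  have "m y (m x w) \<in> coset N (m (m y x) w)" using w x y by simp
  moreover have "m y (m x w) = m (m w x) y" and "m (m y x) w = m w (m x y)"
    using w x y by (simp_all add: mult_commute)
  ultimately show ?thesis by simp
next
  assume "y \<in> center_mod N"
  from Mlt_center_mod[OF this Mlt_comp[OF Ltr_in_Mlt[OF w] Ltr_in_Mlt[OF x]]]
  have "m w (m x y) \<in> coset N (m (m w x) y)" using w x y by simp
  then show ?thesis using coset_sym w x y by simp
next
  assume x_central: "x \<in> center_mod N"
  from Mlt_center_mod[OF x_central Mlt_comp[OF Ltr_in_Mlt[OF y] Ltr_in_Mlt[OF w]]]
  have "m y (m w x) \<in> coset N (m (m y w) x)" using w x y by simp
  moreover from Mlt_center_mod[OF x_central Mlt_comp[OF Ltr_in_Mlt[OF w] Ltr_in_Mlt[OF y]]]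
  have "m w (m y x) \<in> coset N (m (m w y) x)" using w x y by simp
  moreover have "m y (m w x) = m (m w x) y" "m y w = m w y" "m y x = m x y"
    using w x y by (simp_all add: mult_commute)
  ultimately show ?thesis using coset_trans coset_sym w x y by (metis mult_in)
qed

lemma assoc_in_normal:
  assumes a: "a \<in> S" and b: "b \<in> S" and c: "c \<in> S"
    and central: "a \<in> center_mod N \<or> b \<in> center_mod N \<or> c \<in> center_mod N"
  shows "assoc S m a b c \<in> N"
proof -
  have "m (m a (m b c)) (assoc S m a b c) \<in> coset N (m (m a (m b c)) u)"
    using mult_assoc_coset[OF a b c central] assoc_eq[OF a b c] a b c by simp
  then have "assoc S m a b c \<in> coset N u" by (rule coset_cancel_left[rotated 3]) (simp_all add: a b c)
  then show ?thesis using coset_unit by simp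
qed

lemma ldiv_mult_mult_coset:
  assumes x: "x \<in> S" and y: "y \<in> S" and w: "w \<in> S"
    and central: "x \<in> center_mod N \<or> y \<in> center_mod N"
  shows "ldiv (m x y) (m y (m x w)) \<in> coset N w"
proof (rule coset_cancel_left[of "m x y"])
  have "m y (m x w) = m (m w x) y" using x y w by (simp add: mult_commute)
  also have "\<dots> \<in> coset N (m w (m x y))" using mult_assoc_coset[OF w x y] central by blast
  finally show "m (m x y) (ldiv (m x y) (m y (m x w))) \<in> coset N (m (m x y) w)"
    using x y w by (simp add: mult_commute[of w])
qed (simp_all add: x y w)

end

lemma normal_subloop_unit: "normal_subloop {u}"
  unfolding normal_subloop_def using Inn_unit by auto

lemma upper_center_Suc_center_mod:
  assumes "normal_subloop (upper_center S m u i)"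
  shows "upper_center S m u (Suc i) = center_mod (upper_center S m u i)"
  using coset_in_quot_center_iff[OF assms] center_mod_in
  by (auto simp: Let_def coset_def[abs_def])

lemma center_mod_unit: "center_mod {u} = center S m u"
  by (auto simp: center_mod_def center_def coset_def)

lemma center_in: "c \<in> center S m u \<Longrightarrow> c \<in> S"
  by (simp add: center_def)

lemma Mlt_center:
  assumes c: "c \<in> center S m u" and f: "f \<in> Mlt S m"
  shows "f c = m (f u) c"
proof -
  have "f c = m (f u) ((Ltr_inv S m (f u) \<circ> f) c)" by (rule Mlt_decompose[OF f center_in[OF c]])
  also have "(Ltr_inv S m (f u) \<circ> f) c = c" using c Ltr_inv_comp_in_Inn[OF f] unfolding center_def by blast
  finally show ?thesis .
qed

lemma mult_center_assoc:
  assumes c: "c \<in> center S m u" and x: "x \<in> S" and y: "y \<in> S"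
  shows "m x (m y c) = m (m x y) c"
  using Mlt_center[OF c Mlt_comp[OF Ltr_in_Mlt[OF x] Ltr_in_Mlt[OF y]]] x y center_in[OF c] by simp

lemma mult_center_right_commute:
  assumes c: "c \<in> center S m u" and x: "x \<in> S" and y: "y \<in> S"
  shows "m (m x c) y = m (m x y) c"
  using mult_center_assoc[OF c y x] x y center_in[OF c] by (simp add: mult_commute)

lemma assoc_mult_center_left:
  assumes c: "c \<in> center S m u" and a: "a \<in> S" and b: "b \<in> S" and d: "d \<in> S"
  shows "assoc S m (m a c) b d = assoc S m a b d"
proof (rule assoc_eqI)
  let ?z = "assoc S m a b d"
  have "m (m (m a c) b) d = m (m (m a b) d) c"
    by (simp add: mult_center_right_commute[OF c a b] mult_center_right_commute[OF c _ d] a b)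
  also have "\<dots> = m (m (m a (m b d)) ?z) c" using assoc_eq[OF a b d] by simp
  also have "\<dots> = m (m (m a c) (m b d)) ?z"
    by (simp add: mult_center_right_commute[OF c _ assoc_in] mult_center_right_commute[OF c a] a b d)
  finally show "m (m (m a c) b) d = m (m (m a c) (m b d)) ?z" .
qed (use a b d center_in[OF c] in simp_all)

lemma assoc_mult_center_middle:
  assumes c: "c \<in> center S m u" and a: "a \<in> S" and b: "b \<in> S" and d: "d \<in> S"
  shows "assoc S m a (m b c) d = assoc S m a b d"
proof (rule assoc_eqI)
  let ?z = "assoc S m a b d"
  have "m (m a (m b c)) d = m (m (m a b) d) c"
    by (simp add: mult_center_assoc[OF c a b] mult_center_right_commute[OF c _ d] a b)
  also have "\<dots> = m (m (m a (m b d)) ?z) c" using assoc_eq[OF a b d] by simp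
  also have "\<dots> = m (m a (m (m b c) d)) ?z"
    by (simp add: mult_center_right_commute[OF c _ assoc_in] mult_center_right_commute[OF c b d]
        mult_center_assoc[OF c a] a b d)
  finally show "m (m a (m b c)) d = m (m a (m (m b c) d)) ?z" .
qed (use a b d center_in[OF c] in simp_all)

lemma assoc_mult_center_right:
  assumes c: "c \<in> center S m u" and a: "a \<in> S" and b: "b \<in> S" and d: "d \<in> S"
  shows "assoc S m a b (m d c) = assoc S m a b d"
proof (rule assoc_eqI)
  let ?z = "assoc S m a b d"
  have "m (m a b) (m d c) = m (m (m a b) d) c" by (simp add: mult_center_assoc[OF c _ d] a b)
  also have "\<dots> = m (m (m a (m b d)) ?z) c" using assoc_eq[OF a b d] by simp
  also have "\<dots> = m (m a (m b (m d c))) ?z"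
    by (simp add: mult_center_right_commute[OF c _ assoc_in] mult_center_assoc[OF c b d]
        mult_center_assoc[OF c a] a b d)
  finally show "m (m a b) (m d c) = m (m a (m b (m d c))) ?z" .
qed (use a b d center_in[OF c] in simp_all)

end

section \<open>Commutative automorphic loops\<close>

locale comm_aut_loop = comm_loop +
  assumes automorphic: "automorphic S m u"
begin

lemma Inn_mult: "t \<in> Inn S m u \<Longrightarrow> a \<in> S \<Longrightarrow> b \<in> S \<Longrightarrow> t (m a b) = m (t a) (t b)"
  using automorphic unfolding automorphic_def by blast

lemma normal_center_mod:
  assumes N: "normal_subloop N"
  shows "normal_subloop (center_mod N)"
  unfolding normal_subloop_def
proof (intro conjI ballI)
  show "center_mod N \<subseteq> S" using center_mod_in by blast
  show "u \<in> center_mod N" by (rule center_modI) (simp_all add: Inn_unit self_in_coset[OF N])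
next
  fix a b assume a: "a \<in> center_mod N" and b: "b \<in> center_mod N"
  have aS: "a \<in> S" and bS: "b \<in> S" using a b center_mod_in by auto
  show "m a b \<in> center_mod N"
  proof (rule center_modI)
    fix t assume t: "t \<in> Inn S m u"
    show "t (m a b) \<in> coset N (m a b)"
      using Inn_mult[OF t aS bS] coset_mult[OF N aS bS center_modD[OF a t] center_modD[OF b t]] by simp
  qed (simp add: aS bS)
  show "ldiv a b \<in> center_mod N"
  proof (rule center_modI)
    fix t assume t: "t \<in> Inn S m u"
    define z where "z = ldiv a b"
    have zS: "z \<in> S" and taS: "t a \<in> S" and tzS: "t z \<in> S"
      unfolding z_def using aS bS Inn_in[OF t] by simp_all
    have "m (t a) (t z) = t b" using Inn_mult[OF t aS zS] aS bS unfolding z_def by simp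
    also have "\<dots> \<in> coset N (m a z)" using center_modD[OF b t] aS bS unfolding z_def by simp
    also have "coset N (m a z) = coset N (m (t a) z)"
      using coset_mult[OF N aS zS center_modD[OF a t] self_in_coset[OF N zS]]
      by (intro coset_eq[OF N, symmetric]) (simp_all add: aS taS zS)
    finally show "t z \<in> coset N z" by (rule coset_cancel_left[OF N taS tzS zS])
  qed (simp add: aS bS)
next
  fix t n assume t: "t \<in> Inn S m u" and n: "n \<in> center_mod N"
  have nS: "n \<in> S" using center_mod_in[OF n] .
  show "t n \<in> center_mod N"
  proof (rule center_modI)
    fix s assume s: "s \<in> Inn S m u"
    have "(s \<circ> t) n \<in> coset N n" by (rule center_modD[OF n Inn_comp[OF s t]])
    then show "s (t n) \<in> coset N (t n)" using coset_eq[OF N nS center_modD[OF n t]] by simp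
  qed (rule Inn_in[OF t nS])
qed

lemma normal_upper_center: "normal_subloop (upper_center S m u i)"
proof (induction i)
  case 0
  show ?case using normal_subloop_unit by simp
next
  case (Suc i)
  show ?case unfolding upper_center_Suc_center_mod[OF Suc.IH] by (rule normal_center_mod[OF Suc.IH])
qed

lemma upper_center_Suc: "upper_center S m u (Suc i) = center_mod (upper_center S m u i)"
  by (rule upper_center_Suc_center_mod[OF normal_upper_center])

lemma upper_center_one: "upper_center S m u 1 = center S m u"
  using upper_center_Suc[of 0] center_mod_unit by simp

lemma upper_center_two: "upper_center S m u 2 = center_mod (upper_center S m u 1)"
  using upper_center_Suc[of 1] by (simp only: numeral_2_eq_2 One_nat_def)

lemma assoc_in_upper_center:
  assumes "upper_center S m u (Suc n) = S" and "a \<in> S" "b \<in> S" "c \<in> S"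
  shows "assoc S m a b c \<in> upper_center S m u n"
  using assoc_in_normal[OF normal_upper_center] upper_center_Suc assms by blast

lemma Inn_assoc:
  assumes t: "t \<in> Inn S m u" and a: "a \<in> S" and b: "b \<in> S" and c: "c \<in> S"
  shows "t (assoc S m a b c) = assoc S m (t a) (t b) (t c)"
proof (rule assoc_eqI[symmetric])
  have "t (m (m a b) c) = t (m (m a (m b c)) (assoc S m a b c))" using assoc_eq[OF a b c] by simp
  then show "m (m (t a) (t b)) (t c) = m (m (t a) (m (t b) (t c))) (t (assoc S m a b c))"
    using a b c by (simp add: Inn_mult[OF t])
qed (simp_all add: Inn_in[OF t] a b c)

lemma Inn_fixes_assoc:
  assumes t: "t \<in> Inn S m u" and central_shift: "\<And>w. w \<in> S \<Longrightarrow> t w \<in> coset (center S m u) w"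
    and a: "a \<in> S" and b: "b \<in> S" and c: "c \<in> S"
  shows "t (assoc S m a b c) = assoc S m a b c"
proof -
  obtain z1 z2 z3 where z: "z1 \<in> center S m u" "z2 \<in> center S m u" "z3 \<in> center S m u"
    and shifts: "t a = m a z1" "t b = m b z2" "t c = m c z3"
    using central_shift[OF a] central_shift[OF b] central_shift[OF c] unfolding coset_def by blast
  have "t (assoc S m a b c) = assoc S m (m a z1) (m b z2) (m c z3)"
    using Inn_assoc[OF t a b c] shifts by simp
  also have "\<dots> = assoc S m a b c"
    using a b c z center_in
    by (simp add: assoc_mult_center_left assoc_mult_center_middle assoc_mult_center_right)
  finally show ?thesis .
qed

lemma assoc_assoc_upper_center_two:
  assumes x: "x \<in> S" and y: "y \<in> S"
    and x_or_y: "x \<in> upper_center S m u 2 \<or> y \<in> upper_center S m u 2"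
    and a: "a \<in> S" and b: "b \<in> S" and c: "c \<in> S"
  shows "assoc S m (assoc S m a b c) x y = u"
proof -
  define A where "A = assoc S m a b c"
  have A: "A \<in> S" unfolding A_def using a b c by simp
  \<comment> \<open>R_xy^-1 R_y R_x, written with left translations; its fixed points A satisfy (Ax)y = A(xy).\<close>
  define \<theta> where "\<theta> = Ltr_inv S m (m x y) \<circ> Ltr S m y \<circ> Ltr S m x"
  have \<theta>_apply: "\<theta> w = ldiv (m x y) (m y (m x w))" if "w \<in> S" for w
    unfolding \<theta>_def using that x y by simp
  have "\<theta> \<in> Mlt S m"
    unfolding \<theta>_def using x y by (intro Mlt_comp Ltr_inv_in_Mlt Ltr_in_Mlt) simp_all
  moreover have "\<theta> u = u" using \<theta>_apply[OF unit_in] x y by (simp add: mult_commute[of y x])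
  ultimately have \<theta>_inner: "\<theta> \<in> Inn S m u" unfolding Inn_def by simp
  have "\<theta> w \<in> coset (center S m u) w" if w: "w \<in> S" for w
  proof -
    from x_or_y have "x \<in> center_mod (upper_center S m u 1) \<or> y \<in> center_mod (upper_center S m u 1)"
      unfolding upper_center_two .
    from ldiv_mult_mult_coset[OF normal_upper_center x y w this]
    show ?thesis unfolding \<theta>_apply[OF w] upper_center_one .
  qed
  then have "\<theta> A = A" unfolding A_def by (rule Inn_fixes_assoc[OF \<theta>_inner _ a b c])
  then have "m y (m x A) = m (m x y) A" using \<theta>_apply[OF A] mult_ldiv[of "m x y" "m y (m x A)"] A x y by simp
  then show ?thesis unfolding A_def[symmetric] using A x y by (simp add: assoc_eq_unit_iff mult_commute)
qed

end

theorem lemma2p6: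
  fixes S :: "'a set" and m :: "'a \<Rightarrow> 'a \<Rightarrow> 'a" and u :: 'a
  assumes "commutative_loop S m u"
    and "automorphic S m u"
    and "nilpotency_class S m u 3"
    and "a \<in> S" "b \<in> S" "c \<in> S" "d \<in> S" "e \<in> S" "f \<in> S" "g \<in> S"
  shows "assoc S m a (assoc S m b c d) (assoc S m e f g) = u
    \<and> assoc S m (assoc S m a b c) d (assoc S m e f g) = u
    \<and> assoc S m (assoc S m a b c) (assoc S m d e f) g = u"
proof -
  interpret comm_aut_loop S m u using assms(1,2) by unfold_locales
  have "upper_center S m u (Suc 2) = S" using assms(3) by (simp add: nilpotency_class_def numeral_3_eq_3)
  then have Z2: "assoc S m x y z \<in> upper_center S m u 2" if "x \<in> S" "y \<in> S" "z \<in> S" for x y z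
    using assoc_in_upper_center that by blast
  have "assoc S m (assoc S m e f g) (assoc S m b c d) a = u"
    using assoc_assoc_upper_center_two Z2 assms(4-10) by simp
  then have "assoc S m a (assoc S m b c d) (assoc S m e f g) = u"
    using assoc_eq_unit_swap assms(4-10) by simp
  moreover have "assoc S m (assoc S m a b c) d (assoc S m e f g) = u"
    using assoc_assoc_upper_center_two Z2 assms(4-10) by simp
  moreover have "assoc S m (assoc S m a b c) (assoc S m d e f) g = u"
    using assoc_assoc_upper_center_two Z2 assms(4-10) by simp
  ultimately show ?thesis by blast
qed

end
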